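(* Let $a,b\in\mathbb{R}\setminus\{0\}$, $s\le t$, and let $$m=\int_s^t\int_s^\sigma e^{ia\sigma}e^{ib\sigma_1}d\sigma_1\,d\sigma-I_{a+b=0}\frac{t-s}{ib}.$$ If $\gamma\in[0,1/2]$ then $$|m|\lesssim\frac{|t-s|^{2\gamma}}{|b|^{\gamma}|a|^{1-\gamma}|a+b|^{1-2\gamma}}+\frac{|t-s|^{2\gamma}}{|a|^{1-\gamma}|b|^{1-\gamma}}.$$
   Context: $I_{a+b=0}$ is $1$ if $a+b=0$ and $0$ otherwise; the implicit constant is independent of $a,b,s,t$. When $a+b=0$ and $\gamma<1/2$ the first term on the right is interpreted as $+\infty$. *)

theory Defs
  imports "HOL-Analysis.Analysis"
begin

text \<open>Real power with the convention 0 to the power 0 equals 1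
  (Isabelle's powr has 0 powr 0 = 0).\<close>
definition rpow :: "real \<Rightarrow> real \<Rightarrow> real" where
  "rpow x p = (if p = 0 then 1 else x powr p)"

definition mterm :: "real \<Rightarrow> real \<Rightarrow> real \<Rightarrow> real \<Rightarrow> complex" where
  "mterm a b s t =
     integral {s..t} (\<lambda>\<sigma>. exp (\<i> * of_real (a * \<sigma>)) *
        integral {s..\<sigma>} (\<lambda>\<sigma>\<^sub>1. exp (\<i> * of_real (b * \<sigma>\<^sub>1))))
     - (if a + b = 0 then of_real (t - s) / (\<i> * of_real b) else 0)"

end

theory Submission
  imports Defs
begin

text \<open>Write E(c) for the integral of exp(icx) over [s, t], so that |E(c)| \<le> min (t - s) (2/|c|).
  Computing the inner integral gives m = (E(a + b) - exp(ibs) E(a)) / (ib), and, when a + b \<noteq> 0,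
  also m = (exp(iat) E(b) - E(a + b)) / (ia). Using the representation that divides by the larger
  of |a|, |b| and interpolating min (t - s) (2/|c|) \<le> 2 (t - s)^\<theta> |c|^(\<theta> - 1) with \<theta> = 2\<gamma>
  gives the bound with constant 2.\<close>

definition oscillatory_integral :: "real \<Rightarrow> real \<Rightarrow> real \<Rightarrow> complex" where
  "oscillatory_integral c s t = integral {s..t} (\<lambda>x. exp (\<i> * of_real (c * x)))"

lemma has_vector_derivative_exp_i_scaled:
  assumes "c \<noteq> 0"
  shows "((\<lambda>x::real. exp (\<i> * of_real (c * x)) / (\<i> * of_real c))
           has_vector_derivative exp (\<i> * of_real (c * x))) (at x within S)"
proof -
  have "((\<lambda>z. exp (\<i> * (of_real c * z)) / (\<i> * of_real c)) has_field_derivative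
          (\<i> * of_real c) * exp (\<i> * (of_real c * of_real x)) / (\<i> * of_real c)) (at (of_real x))"
    by (auto intro!: derivative_eq_intros simp: mult.commute mult.left_commute)
  from has_vector_derivative_real_field[OF this, of S] show ?thesis
    using assms by (simp add: mult.commute mult.left_commute)
qed

lemma has_integral_exp_i_scaled:
  assumes "c \<noteq> 0" "s \<le> t"
  shows "((\<lambda>x::real. exp (\<i> * of_real (c * x))) has_integral
           (exp (\<i> * of_real (c * t)) - exp (\<i> * of_real (c * s))) / (\<i> * of_real c)) {s..t}"
  using fundamental_theorem_of_calculus[OF assms(2) has_vector_derivative_exp_i_scaled[OF assms(1)]]
  by (simp add: diff_divide_distrib)

lemma oscillatory_integral_eq:
  assumes "c \<noteq> 0" "s \<le> t"
  shows "oscillatory_integral c s t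
           = (exp (\<i> * of_real (c * t)) - exp (\<i> * of_real (c * s))) / (\<i> * of_real c)"
  unfolding oscillatory_integral_def using has_integral_exp_i_scaled[OF assms] by blast

lemma oscillatory_integral_zero: "s \<le> t \<Longrightarrow> oscillatory_integral 0 s t = of_real (t - s)"
  using has_integral_const_real[of "1::complex" s t]
  by (simp add: oscillatory_integral_def scaleR_conv_of_real integral_unique)

lemma norm_oscillatory_integral_le:
  assumes "c \<noteq> 0" "s \<le> t"
  shows "cmod (oscillatory_integral c s t) \<le> min (t - s) (2 / \<bar>c\<bar>)"
proof -
  have "cmod (oscillatory_integral c s t) \<le> 1 * (t - s)"
    unfolding oscillatory_integral_def
    by (rule integral_bound[OF assms(2)]) (auto intro!: continuous_intros)
  moreover have "cmod (exp (\<i> * of_real (c * t)) - exp (\<i> * of_real (c * s))) \<le> 2"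
    using norm_triangle_ineq4[of "exp (\<i> * of_real (c * t))" "exp (\<i> * of_real (c * s))"]
    by simp
  then have "cmod (oscillatory_integral c s t) \<le> 2 / \<bar>c\<bar>"
    by (simp add: oscillatory_integral_eq[OF assms] norm_divide norm_mult divide_right_mono)
  ultimately show ?thesis by simp
qed

lemma integral_exp_i_mult_integral_exp_i:
  assumes "b \<noteq> 0"
  shows "integral {s..t} (\<lambda>\<sigma>. exp (\<i> * of_real (a * \<sigma>)) *
            integral {s..\<sigma>} (\<lambda>\<sigma>\<^sub>1. exp (\<i> * of_real (b * \<sigma>\<^sub>1))))
         = (oscillatory_integral (a + b) s t
              - exp (\<i> * of_real (b * s)) * oscillatory_integral a s t) / (\<i> * of_real b)"
proof -
  define Y where "Y = exp (\<i> * of_real (b * s))"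
  have integrand_eq: "exp (\<i> * of_real (a * \<sigma>)) * integral {s..\<sigma>} (\<lambda>\<sigma>\<^sub>1. exp (\<i> * of_real (b * \<sigma>\<^sub>1)))
      = (exp (\<i> * of_real ((a + b) * \<sigma>)) - Y * exp (\<i> * of_real (a * \<sigma>))) / (\<i> * of_real b)"
    if "\<sigma> \<in> {s..t}" for \<sigma>
  proof -
    have "integral {s..\<sigma>} (\<lambda>\<sigma>\<^sub>1. exp (\<i> * of_real (b * \<sigma>\<^sub>1))) = (exp (\<i> * of_real (b * \<sigma>)) - Y) / (\<i> * of_real b)"
      using oscillatory_integral_eq[OF assms, of s \<sigma>] that by (simp add: oscillatory_integral_def Y_def)
    moreover have "exp (\<i> * of_real ((a + b) * \<sigma>)) = exp (\<i> * of_real (a * \<sigma>)) * exp (\<i> * of_real (b * \<sigma>))"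
      by (simp add: exp_add[symmetric] ring_distribs)
    ultimately show ?thesis by (simp add: field_simps)
  qed
  have "integral {s..t} (\<lambda>\<sigma>. exp (\<i> * of_real (a * \<sigma>)) *
            integral {s..\<sigma>} (\<lambda>\<sigma>\<^sub>1. exp (\<i> * of_real (b * \<sigma>\<^sub>1))))
      = integral {s..t} (\<lambda>\<sigma>. (exp (\<i> * of_real ((a + b) * \<sigma>)) - Y * exp (\<i> * of_real (a * \<sigma>))) / (\<i> * of_real b))"
    by (rule integral_cong) (rule integrand_eq)
  also have "\<dots> = (oscillatory_integral (a + b) s t - Y * oscillatory_integral a s t) / (\<i> * of_real b)"
    unfolding oscillatory_integral_def
    by (intro integral_unique has_integral_divide has_integral_diff has_integral_mult_right integrable_integral
          integrable_continuous_interval continuous_intros)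
  finally show ?thesis
    unfolding Y_def .
qed

lemma norm_mterm_resonant_le:
  assumes "a + b = 0" "b \<noteq> 0" "s \<le> t"
  shows "cmod (mterm a b s t) \<le> (t - s) / \<bar>b\<bar>"
proof -
  have "a \<noteq> 0" using assms by simp
  have "oscillatory_integral (a + b) s t = of_real (t - s)"
    using assms by (simp add: oscillatory_integral_zero)
  then have "mterm a b s t = - (exp (\<i> * of_real (b * s)) * oscillatory_integral a s t) / (\<i> * of_real b)"
    unfolding mterm_def integral_exp_i_mult_integral_exp_i[OF assms(2)]
    using assms(1) by (simp add: diff_divide_distrib)
  then have "cmod (mterm a b s t) = cmod (oscillatory_integral a s t) / \<bar>b\<bar>"
    by (simp add: norm_divide norm_mult)
  also have "\<dots> \<le> (t - s) / \<bar>b\<bar>"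
    using norm_oscillatory_integral_le[OF \<open>a \<noteq> 0\<close> assms(3)] by (simp add: divide_right_mono)
  finally show ?thesis .
qed

lemma norm_mterm_nonresonant_le:
  assumes "a \<noteq> 0" "b \<noteq> 0" "a + b \<noteq> 0" "s \<le> t"
  shows "cmod (mterm a b s t)
           \<le> (cmod (oscillatory_integral (a + b) s t) + cmod (oscillatory_integral a s t)) / \<bar>b\<bar>"
    and "cmod (mterm a b s t)
           \<le> (cmod (oscillatory_integral b s t) + cmod (oscillatory_integral (a + b) s t)) / \<bar>a\<bar>"
proof -
  define X X' Y Y' where X_def: "X = exp (\<i> * of_real (a * s))" and X'_def: "X' = exp (\<i> * of_real (a * t))"
    and Y_def: "Y = exp (\<i> * of_real (b * s))" and Y'_def: "Y' = exp (\<i> * of_real (b * t))"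
  have m_eq: "mterm a b s t = (oscillatory_integral (a + b) s t - Y * oscillatory_integral a s t) / (\<i> * of_real b)"
    unfolding mterm_def integral_exp_i_mult_integral_exp_i[OF assms(2)] Y_def using assms(3) by simp
  then show "cmod (mterm a b s t)
      \<le> (cmod (oscillatory_integral (a + b) s t) + cmod (oscillatory_integral a s t)) / \<bar>b\<bar>"
    using norm_triangle_ineq4[of "oscillatory_integral (a + b) s t" "Y * oscillatory_integral a s t"]
    by (simp add: norm_divide norm_mult Y_def divide_right_mono)
  have "exp (\<i> * of_real ((a + b) * x)) = exp (\<i> * of_real (a * x)) * exp (\<i> * of_real (b * x))" for x
    by (simp add: exp_add[symmetric] ring_distribs)
  then have Eab: "oscillatory_integral (a + b) s t = (X' * Y' - X * Y) / (\<i> * of_real (a + b))"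
    using assms by (simp add: oscillatory_integral_eq X_def X'_def Y_def Y'_def)
  have Ea: "oscillatory_integral a s t = (X' - X) / (\<i> * of_real a)"
    and Eb: "oscillatory_integral b s t = (Y' - Y) / (\<i> * of_real b)"
    using assms by (simp_all add: oscillatory_integral_eq X_def X'_def Y_def Y'_def)
  have "\<i> * of_real a + \<i> * of_real b \<noteq> (0::complex)"
    using assms(3) by (metis distrib_left mult_eq_0_iff complex_i_not_zero of_real_add of_real_eq_0_iff)
  then have "mterm a b s t = (X' * oscillatory_integral b s t - oscillatory_integral (a + b) s t) / (\<i> * of_real a)"
    unfolding m_eq Eab Ea Eb using assms(1,2) by (simp add: field_simps)
  then show "cmod (mterm a b s t)
      \<le> (cmod (oscillatory_integral b s t) + cmod (oscillatory_integral (a + b) s t)) / \<bar>a\<bar>"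
    using norm_triangle_ineq4[of "X' * oscillatory_integral b s t" "oscillatory_integral (a + b) s t"]
    by (simp add: norm_divide norm_mult X'_def divide_right_mono)
qed

lemma min_le_rpow_mult_powr:
  assumes "T \<ge> 0" "x > 0" "0 \<le> \<theta>" "\<theta> \<le> 1"
  shows "min T x \<le> rpow T \<theta> * x powr (1 - \<theta>)"
proof (cases "\<theta> = 0 \<or> T = 0")
  case True
  then show ?thesis using assms by (auto simp: rpow_def)
next
  case False
  then have "T > 0" and rpow_T: "rpow T \<theta> = T powr \<theta>" using assms by (auto simp: rpow_def)
  have "min T x = min T x powr \<theta> * min T x powr (1 - \<theta>)"
    using \<open>T > 0\<close> assms by (simp add: powr_add[symmetric])
  also have "\<dots> \<le> T powr \<theta> * x powr (1 - \<theta>)"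
    using \<open>T > 0\<close> assms by (intro mult_mono powr_mono2) auto
  finally show ?thesis unfolding rpow_T .
qed

lemma min_le_rpow_div_powr:
  assumes "T \<ge> 0" "c > 0" "0 \<le> \<theta>" "\<theta> \<le> 1"
  shows "min T (2 / c) \<le> 2 * rpow T \<theta> / c powr (1 - \<theta>)"
proof -
  have "rpow T \<theta> \<ge> 0" by (simp add: rpow_def)
  have "min T (2 / c) \<le> rpow T \<theta> * 2 powr (1 - \<theta>) / c powr (1 - \<theta>)"
    using min_le_rpow_mult_powr[of T "2 / c" \<theta>] assms by (simp add: powr_divide)
  also have "\<dots> \<le> rpow T \<theta> * 2 / c powr (1 - \<theta>)"
    using \<open>rpow T \<theta> \<ge> 0\<close> powr_mono[of "1 - \<theta>" 1 2] assms
    by (intro divide_right_mono mult_left_mono) auto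
  finally show ?thesis by (simp add: mult.commute)
qed

lemma powr_mult_powr_le_max:
  fixes x y \<theta> :: real
  assumes "x \<ge> 0" "y \<ge> 0" "0 \<le> \<theta>" "\<theta> \<le> 1"
  shows "x powr \<theta> * y powr (1 - \<theta>) \<le> max x y"
proof -
  have "x powr \<theta> * y powr (1 - \<theta>) \<le> max x y powr \<theta> * max x y powr (1 - \<theta>)"
    using assms by (intro mult_mono powr_mono2) auto
  also have "\<dots> = max x y"
    using assms by (simp add: powr_add[symmetric])
  finally show ?thesis .
qed

lemma interpolated_bound:
  fixes \<alpha> \<beta> \<kappa> T \<gamma> m e\<^sub>\<alpha> e\<^sub>\<beta> e\<^sub>\<kappa> :: real
  assumes pos: "\<alpha> > 0" "\<beta> > 0" "\<kappa> > 0" "T \<ge> 0" and \<gamma>: "0 \<le> \<gamma>" "\<gamma> \<le> 1/2"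
    and e: "e\<^sub>\<alpha> \<le> min T (2 / \<alpha>)" "e\<^sub>\<beta> \<le> min T (2 / \<beta>)" "e\<^sub>\<kappa> \<le> min T (2 / \<kappa>)"
    and m: "m \<le> (e\<^sub>\<kappa> + e\<^sub>\<alpha>) / \<beta>" "m \<le> (e\<^sub>\<beta> + e\<^sub>\<kappa>) / \<alpha>"
  shows "m \<le> 2 * (rpow T (2*\<gamma>) / (\<beta> powr \<gamma> * \<alpha> powr (1-\<gamma>) * \<kappa> powr (1 - 2*\<gamma>))
                 + rpow T (2*\<gamma>) / (\<alpha> powr (1-\<gamma>) * \<beta> powr (1-\<gamma>)))"
proof -
  define P p \<mu> M where "P = rpow T (2*\<gamma>)" and "p = 1 - 2*\<gamma>"
    and "\<mu> = min \<alpha> \<beta>" and "M = max \<alpha> \<beta>"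
  have "P \<ge> 0" by (simp add: P_def rpow_def)
  have "\<mu> > 0" "M > 0" "\<mu> \<le> M" using pos by (auto simp: \<mu>_def M_def)
  have e_le: "e \<le> 2 * P / c powr p" if "e \<le> min T (2 / c)" "c > 0" for e c
    using that min_le_rpow_div_powr[of T c "2*\<gamma>"] pos \<gamma> unfolding P_def p_def by linarith
  obtain e\<^sub>\<mu> where e\<^sub>\<mu>: "e\<^sub>\<mu> \<le> min T (2 / \<mu>)" and "m \<le> (e\<^sub>\<kappa> + e\<^sub>\<mu>) / M"
  proof (cases "\<alpha> \<le> \<beta>")
    case True
    then show ?thesis using that[of e\<^sub>\<alpha>] e m by (simp add: \<mu>_def M_def)
  next
    case False
    then show ?thesis using that[of e\<^sub>\<beta>] e m by (simp add: \<mu>_def M_def add.commute)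
  qed
  note \<open>m \<le> (e\<^sub>\<kappa> + e\<^sub>\<mu>) / M\<close>
  also have "\<dots> \<le> (2 * P / \<kappa> powr p + 2 * P / \<mu> powr p) / M"
    using e(3) e\<^sub>\<mu> pos \<open>\<mu> > 0\<close> \<open>M > 0\<close> by (intro divide_right_mono add_mono e_le) auto
  also have "\<dots> = 2 * (P / (M * \<kappa> powr p) + P / (\<mu> powr p * M))"
    using pos \<open>\<mu> > 0\<close> \<open>M > 0\<close> by (simp add: field_simps)
  also have "\<dots> \<le> 2 * (P / (\<beta> powr \<gamma> * \<alpha> powr (1-\<gamma>) * \<kappa> powr p)
                      + P / (\<alpha> powr (1-\<gamma>) * \<beta> powr (1-\<gamma>)))"
  proof -
    have "\<beta> powr \<gamma> * \<alpha> powr (1-\<gamma>) \<le> M"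
      using powr_mult_powr_le_max[of \<beta> \<alpha> \<gamma>] pos \<gamma> by (simp add: M_def max.commute)
    then have first: "\<beta> powr \<gamma> * \<alpha> powr (1-\<gamma>) * \<kappa> powr p \<le> M * \<kappa> powr p"
      by (simp add: mult_right_mono)
    have "\<alpha> powr (1-\<gamma>) * \<beta> powr (1-\<gamma>) = \<mu> powr (1-\<gamma>) * M powr (1-\<gamma>)"
      by (cases "\<alpha> \<le> \<beta>") (auto simp: \<mu>_def M_def max_def min_def mult.commute)
    also have "\<dots> = \<mu> powr p * (\<mu> powr \<gamma> * M powr (1-\<gamma>))"
      by (simp add: p_def powr_add[symmetric])
    also have "\<dots> \<le> \<mu> powr p * M"
      using powr_mult_powr_le_max[of \<mu> M \<gamma>] \<open>\<mu> > 0\<close> \<open>\<mu> \<le> M\<close> \<gamma>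
      by (intro mult_left_mono) (auto simp: max_absorb2)
    finally have second: "\<alpha> powr (1-\<gamma>) * \<beta> powr (1-\<gamma>) \<le> \<mu> powr p * M" .
    show ?thesis
      using first second \<open>P \<ge> 0\<close> pos \<open>\<mu> > 0\<close> \<open>M > 0\<close>
      by (intro mult_left_mono add_mono divide_left_mono) (auto intro: mult_pos_pos)
  qed
  finally show ?thesis unfolding P_def p_def .
qed

lemma norm_mterm_nonresonant_bound:
  assumes "a \<noteq> 0" "b \<noteq> 0" "a + b \<noteq> 0" "s \<le> t" "0 \<le> \<gamma>" "\<gamma> \<le> 1/2"
  shows "cmod (mterm a b s t) \<le> 2 * (
           rpow (t - s) (2*\<gamma>) / (\<bar>b\<bar> powr \<gamma> * \<bar>a\<bar> powr (1-\<gamma>) * \<bar>a + b\<bar> powr (1 - 2*\<gamma>))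
         + rpow (t - s) (2*\<gamma>) / (\<bar>a\<bar> powr (1-\<gamma>) * \<bar>b\<bar> powr (1-\<gamma>)))"
  using interpolated_bound[OF _ _ _ _ assms(5,6) norm_oscillatory_integral_le[OF assms(1,4)]
      norm_oscillatory_integral_le[OF assms(2,4)] norm_oscillatory_integral_le[OF assms(3,4)]
      norm_mterm_nonresonant_le[OF assms(1-4)]] assms
  by simp

theorem lemma8:
  "\<exists>C>0. \<forall>(a::real) (b::real) (s::real) (t::real) (\<gamma>::real).
     a \<noteq> 0 \<longrightarrow> b \<noteq> 0 \<longrightarrow> s \<le> t \<longrightarrow> 0 \<le> \<gamma> \<longrightarrow> \<gamma> \<le> 1/2 \<longrightarrow>
     (a + b \<noteq> 0 \<or> \<gamma> = 1/2) \<longrightarrow>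
     cmod (mterm a b s t) \<le> C * (
        rpow \<bar>t - s\<bar> (2*\<gamma>) / (rpow \<bar>b\<bar> \<gamma> * rpow \<bar>a\<bar> (1-\<gamma>) * rpow \<bar>a + b\<bar> (1 - 2*\<gamma>))
      + rpow \<bar>t - s\<bar> (2*\<gamma>) / (rpow \<bar>a\<bar> (1-\<gamma>) * rpow \<bar>b\<bar> (1-\<gamma>)))"
proof (intro exI[of _ 2] conjI allI impI)
  fix a b s t \<gamma> :: real
  assume a: "a \<noteq> 0" and b: "b \<noteq> 0" and st: "s \<le> t" and \<gamma>: "0 \<le> \<gamma>" "\<gamma> \<le> 1/2"
    and ab: "a + b \<noteq> 0 \<or> \<gamma> = 1/2"
  have rpow_abs: "rpow \<bar>x\<bar> p = \<bar>x\<bar> powr p" if "x \<noteq> 0" for x p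
    using that by (simp add: rpow_def)
  show "cmod (mterm a b s t) \<le> 2 * (
        rpow \<bar>t - s\<bar> (2*\<gamma>) / (rpow \<bar>b\<bar> \<gamma> * rpow \<bar>a\<bar> (1-\<gamma>) * rpow \<bar>a + b\<bar> (1 - 2*\<gamma>))
      + rpow \<bar>t - s\<bar> (2*\<gamma>) / (rpow \<bar>a\<bar> (1-\<gamma>) * rpow \<bar>b\<bar> (1-\<gamma>)))"
  proof (cases "a + b = 0")
    case True
    then have "\<gamma> = 1/2" "\<bar>a\<bar> = \<bar>b\<bar>" using ab by auto
    have "\<bar>b\<bar> powr (1/2) * \<bar>b\<bar> powr (1/2) = \<bar>b\<bar>"
      using b by (simp add: powr_add[symmetric])
    then have "rpow \<bar>b\<bar> \<gamma> * rpow \<bar>a\<bar> (1-\<gamma>) = \<bar>b\<bar>" "rpow \<bar>a\<bar> (1-\<gamma>) * rpow \<bar>b\<bar> (1-\<gamma>) = \<bar>b\<bar>"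
      "rpow \<bar>t - s\<bar> (2*\<gamma>) = t - s" "rpow \<bar>a + b\<bar> (1 - 2*\<gamma>) = 1"
      using \<open>\<bar>a\<bar> = \<bar>b\<bar>\<close> b st unfolding \<open>\<gamma> = 1/2\<close> by (simp_all add: rpow_def)
    moreover have "(t - s) / \<bar>b\<bar> \<le> 2 * ((t - s) / \<bar>b\<bar> + (t - s) / \<bar>b\<bar>)"
      using st by (simp add: divide_right_mono)
    ultimately show ?thesis
      using norm_mterm_resonant_le[OF True b st] by simp
  next
    case False
    then show ?thesis
      using norm_mterm_nonresonant_bound[OF a b False st \<gamma>] st a b
      by (simp add: rpow_abs)
  qed
qed simp

end
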